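(* The morphism $\pi_N:\mathcal M(N,K)\to L^-\mathrm{GL}_K$, $(B,\psi,\overline\psi)\mapsto1+\overline\psi(z-\widetilde B/2)^{-1}\psi$, is Poisson.
   Context: $\mathcal M(N,K)=\mathrm{Rep}(N,K)/\!/\mathrm{GL}_N$, with $\mathrm{Rep}(N,K)$ the triples $(B,\psi,\overline\psi)$, $B\in\mathrm{Mat}_{N\times N}(\mathbb C)$, $\psi\in\mathrm{Mat}_{N\times K}$, $\overline\psi\in\mathrm{Mat}_{K\times N}$, and $g\cdot(B,\psi,\overline\psi)=(gBg^{-1},g\psi,\overline\psi g^{-1})$; its Poisson structure is induced from $\{\psi_{ia},\overline\psi_{bj}\}=\delta_{ab}\delta_{ij}$, $\{B_{mn},B_{pq}\}=\delta_{np}\sum_a\overline\psi_{aq}\psi_{ma}-\delta_{mq}\sum_a\overline\psi_{an}\psi_{pa}$, $\{B_{mn},\psi_{ia}\}=\{B_{mn},\overline\psi_{bj}\}=0$ (commuting variables). $\widetilde B=B+\psi\overline\psi$ and $(z-\widetilde B/2)^{-1}$ is expanded as a power series in $z^{-1}$. $L^-\mathrm{GL}_K$ is the group of series $1+\sum_{i\ge1}g_iz^{-i}$, $g_i\in\mathfrak{gl}_K$; $T^{(n)}_{ab}$ is the $(a,b)$ entry of $g_{n+1}$, $T^{(-1)}_{ab}=\delta_{ab}$, $T_{ab}(u)=\sum_{i\ge-1}T^{(i)}_{ab}u^{-i-1}$, and its Poisson structure is $(u-v)\{T_{ab}(u),T_{cd}(v)\}=T_{ad}(v)T_{cb}(u)-T_{ad}(u)T_{cb}(v)$.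 *)

theory Defs
  imports "HOL-Analysis.Analysis"
begin

text \<open>Coordinates on Rep(N,K): B_{mn} (m,n<N), psi_{ia} (i<N, a<K), psibar_{bj} (b<K, j<N).
A point of Rep(N,K) is a valuation of these coordinates.\<close>

datatype var = VB nat nat | VPsi nat nat | VPsibar nat nat

definition vars :: "nat \<Rightarrow> nat \<Rightarrow> var set" where
  "vars N K = (\<lambda>(m,n). VB m n) ` ({..<N} \<times> {..<N})
            \<union> (\<lambda>(i,a). VPsi i a) ` ({..<N} \<times> {..<K})
            \<union> (\<lambda>(b,j). VPsibar b j) ` ({..<K} \<times> {..<N})"

type_synonym point = "var \<Rightarrow> complex"

definition Bm :: "point \<Rightarrow> nat \<Rightarrow> nat \<Rightarrow> complex" where "Bm p m n = p (VB m n)"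
definition Psi :: "point \<Rightarrow> nat \<Rightarrow> nat \<Rightarrow> complex" where "Psi p i a = p (VPsi i a)"
definition Psibar :: "point \<Rightarrow> nat \<Rightarrow> nat \<Rightarrow> complex" where "Psibar p b j = p (VPsibar b j)"

definition pd :: "var \<Rightarrow> (point \<Rightarrow> complex) \<Rightarrow> point \<Rightarrow> complex" where
  "pd v f p = deriv (\<lambda>t. f (p(v := t))) (p v)"

fun PiRep :: "nat \<Rightarrow> nat \<Rightarrow> var \<Rightarrow> var \<Rightarrow> point \<Rightarrow> complex" where
  "PiRep N K (VPsi i a) (VPsibar b j) p = (if a = b \<and> i = j then 1 else 0)"
| "PiRep N K (VPsibar b j) (VPsi i a) p = - (if a = b \<and> i = j then 1 else 0)"
| "PiRep N K (VB m n) (VB p' q) p =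
     (if n = p' then (\<Sum>a<K. Psibar p a q * Psi p m a) else 0)
   - (if m = q then (\<Sum>a<K. Psibar p a n * Psi p p' a) else 0)"
| "PiRep N K _ _ p = 0"

definition pbr :: "nat \<Rightarrow> nat \<Rightarrow> (point \<Rightarrow> complex) \<Rightarrow> (point \<Rightarrow> complex) \<Rightarrow> point \<Rightarrow> complex" where
  "pbr N K f g p = (\<Sum>v\<in>vars N K. \<Sum>w\<in>vars N K. pd v f p * PiRep N K v w p * pd w g p)"

definition mmul :: "nat \<Rightarrow> (nat \<Rightarrow> nat \<Rightarrow> complex) \<Rightarrow> (nat \<Rightarrow> nat \<Rightarrow> complex) \<Rightarrow> nat \<Rightarrow> nat \<Rightarrow> complex" where
  "mmul N A C i j = (\<Sum>k<N. A i k * C k j)"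

fun mpow :: "nat \<Rightarrow> (nat \<Rightarrow> nat \<Rightarrow> complex) \<Rightarrow> nat \<Rightarrow> nat \<Rightarrow> nat \<Rightarrow> complex" where
  "mpow N A 0 = (\<lambda>i j. if i = j then 1 else 0)"
| "mpow N A (Suc n) = mmul N (mpow N A n) A"

definition Btilde :: "nat \<Rightarrow> point \<Rightarrow> nat \<Rightarrow> nat \<Rightarrow> complex" where
  "Btilde K p i j = Bm p i j + (\<Sum>a<K. Psi p i a * Psibar p a j)"

text \<open>Pullback along pi_N of the coordinate T^{(n)}_{ab} of L^-GL_K:
  the coefficient of z^{-n-1} in 1 + psibar (z - Btilde/2)^{-1} psi, where
  (z - A)^{-1} = sum_{n>=0} A^n z^{-n-1}.  T^{(-1)}_{ab} = delta_{ab}; for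
  n < -1 the coefficient is 0 (convention for the coefficient comparison).\<close>
definition Tpull :: "nat \<Rightarrow> nat \<Rightarrow> int \<Rightarrow> nat \<Rightarrow> nat \<Rightarrow> point \<Rightarrow> complex" where
  "Tpull N K n a b p =
     (if n < -1 then 0
      else if n = -1 then (if a = b then 1 else 0)
      else (\<Sum>i<N. \<Sum>j<N. Psibar p a i * mpow N (\<lambda>k l. Btilde K p k l / 2) (nat n) i j * Psi p j b))"

end

theory Submission
  imports Defs
begin

(* Put X = Btilde/2. The coefficient T^(n) of the pulled-back series is the moment psibar X^n psi,
   and T^(-1) is the identity. The entries of Btilde Poisson-commute, while X acts on psi and psibar
   by half the infinitesimal GL_N action. A bracket with a fixed function is a derivation, so the
   variation formula
     delta (U A^n V) = (delta U) A^n V + U A^n (delta V) + sum_{m<n} U A^m (delta A) A^(n-1-m) V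
   gives first the brackets of moments with the generators and then the bracket of two moments:
   {T^(m-1)_ab, T^(n-1)_cd} is the coefficient of u^-m v^-n in
   (T_ad(v) T_cb(u) - T_ad(u) T_cb(v)) / (u - v).
   Multiplying by u - v telescopes these coefficients. *)

lemma mult_if_zero_left: "(if P then x else 0) * y = (if P then x * y else (0::'a::mult_zero))"
  and mult_if_zero_right: "y * (if P then x else 0) = (if P then y * x else (0::'a::mult_zero))"
  by simp_all

(* When F i j is the product of the coefficients of u^-i in T_ad(u) and of u^-j in T_cb(u),
   exchange_sum F m n is the coefficient of u^-m v^-n in
   (T_ad(v) T_cb(u) - T_ad(u) T_cb(v)) / (u - v). *)
definition exchange_sum :: "(nat \<Rightarrow> nat \<Rightarrow> 'a::ab_group_add) \<Rightarrow> nat \<Rightarrow> nat \<Rightarrow> 'a" where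
  "exchange_sum F m n = (\<Sum>q<m. F (n + q) (m - Suc q) - F q (m + n - Suc q))"

lemma exchange_sum_0_left [simp]: "exchange_sum F 0 n = 0"
  and exchange_sum_0_right [simp]: "exchange_sum F m 0 = 0"
  unfolding exchange_sum_def by simp_all

lemma exchange_sum_eq_antidiagonal:
  "exchange_sum F m n = (\<Sum>i<m + n. F i (m + n - Suc i)) - (\<Sum>i<m. F i (m + n - Suc i))
                        - (\<Sum>i<n. F i (m + n - Suc i))"
proof -
  let ?G = "\<lambda>i. F i (m + n - Suc i)"
  have "(\<Sum>q<m. F (n + q) (m - Suc q)) = (\<Sum>q<m. ?G (q + n))"
    by (simp add: add.commute)
  also have "\<dots> = sum ?G {n..<m + n}"
    using sum.shift_bounds_nat_ivl[of ?G 0 n m] by (simp add: atLeast0LessThan)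
  also have "\<dots> = (\<Sum>i<m + n. ?G i) - (\<Sum>i<n. ?G i)"
    using sum.atLeastLessThan_concat[of 0 n "m + n" ?G]
    by (simp add: atLeast0LessThan algebra_simps)
  finally show ?thesis
    unfolding exchange_sum_def sum_subtractf by simp
qed

lemma exchange_sum_commute: "exchange_sum F m n = exchange_sum F n m"
  unfolding exchange_sum_eq_antidiagonal by (simp add: add.commute diff_diff_eq)

lemma exchange_sum_reflect:
  "(\<Sum>q<n. F (m + n - Suc q) q - F (n - Suc q) (m + q)) = exchange_sum F m n"
proof -
  have "(\<Sum>q<n. F (m + n - Suc q) q - F (n - Suc q) (m + q))
      = (\<Sum>q<n. (\<lambda>i. F (m + i) (n - Suc i) - F i (n + m - Suc i)) (n - Suc q))"
    by (intro sum.cong) (auto simp: Suc_diff_Suc algebra_simps)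
  also have "\<dots> = exchange_sum F n m"
    unfolding exchange_sum_def by (rule sum.nat_diff_reindex)
  finally show ?thesis
    by (simp add: exchange_sum_commute)
qed

lemma exchange_sum_Suc_Suc:
  "exchange_sum F (Suc m) (Suc n) =
     F (Suc (n + m)) 0 - F 0 (Suc (m + n)) + exchange_sum (\<lambda>i j. F (Suc i) (Suc j)) m n"
proof -
  have "(\<Sum>q<Suc m. F (Suc n + q) (Suc m - Suc q))
      = (\<Sum>q<m. F (Suc (n + q)) (Suc (m - Suc q))) + F (Suc (n + m)) 0"
    by (simp add: Suc_diff_Suc)
  moreover have "(\<Sum>q<Suc m. F q (Suc m + Suc n - Suc q))
      = F 0 (Suc (m + n)) + (\<Sum>q<m. F (Suc q) (Suc (m + n - Suc q)))"
    by (simp add: sum.lessThan_Suc_shift Suc_diff_Suc del: sum.lessThan_Suc)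
  ultimately show ?thesis
    unfolding exchange_sum_def sum_subtractf by (simp add: algebra_simps)
qed

lemma exchange_sum_step:
  "exchange_sum F (Suc m) n - exchange_sum F m (Suc n) = F n m - F m n"
proof -
  have "(\<Sum>q<Suc m. F (n + q) (m - q)) = F n m + (\<Sum>q<m. F (Suc n + q) (m - Suc q))"
    by (simp add: sum.lessThan_Suc_shift del: sum.lessThan_Suc)
  moreover have "(\<Sum>q<Suc m. F q (Suc m + n - Suc q)) = (\<Sum>q<m. F q (m + Suc n - Suc q)) + F m n"
    by simp
  ultimately show ?thesis
    unfolding exchange_sum_def sum_subtractf by (simp add: algebra_simps)
qed

lemma mmul_assoc: "mmul N (mmul N A B) C = mmul N A (mmul N B C)"
  unfolding mmul_def
  by (intro ext) (simp add: sum_distrib_left sum_distrib_right mult.assoc, rule sum.swap)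

lemma mmul_zero_left [simp]: "mmul N (\<lambda>i j. 0) B i j = 0"
  and mmul_zero_right [simp]: "mmul N A (\<lambda>i j. 0) i j = 0"
  unfolding mmul_def by simp_all

lemma mmul_delta_right: "j < N \<Longrightarrow> mmul N M (\<lambda>i j. if i = j then 1 else 0) a j = M a j"
  unfolding mmul_def by (simp add: mult_if_zero_right)

lemma mmul_column_times_row: "mmul N M (\<lambda>k j. C k c * v j) a b = mmul N M C a c * v b"
  unfolding mmul_def by (simp add: sum_distrib_right mult.assoc)

lemma mmul_add_right: "mmul N A (\<lambda>i j. B i j + C i j) i j = mmul N A B i j + mmul N A C i j"
  unfolding mmul_def by (simp add: distrib_left sum.distrib)

lemma mmul_sum_right: "mmul N A (\<lambda>i j. \<Sum>m\<in>S. B m i j) i j = (\<Sum>m\<in>S. mmul N A (B m) i j)"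
  unfolding mmul_def by (simp add: sum_distrib_left sum.swap[of _ S])

lemma mmul_mpow_0: "mmul N M (mmul N (mpow N A 0) V) = mmul N M V"
  unfolding mmul_def by (simp add: if_distrib if_distribR sum.delta cong: if_cong)

lemma mmul_mpow_Suc: "mmul N (mpow N A (Suc n)) V = mmul N (mpow N A n) (mmul N A V)"
  by (simp add: mmul_assoc)

lemma mmul_mpow_mpow: "mmul N (mpow N A m) (mmul N (mpow N A n) V) = mmul N (mpow N A (m + n)) V"
proof (induction n arbitrary: V)
  case 0
  show ?case by (simp only: mmul_mpow_0 add_0_right)
next
  case (Suc n)
  then show ?case by (simp only: mmul_mpow_Suc add_Suc_right)
qed

definition separately_holomorphic :: "(point \<Rightarrow> complex) \<Rightarrow> bool" where
  "separately_holomorphic f \<longleftrightarrow> (\<forall>p v. (\<lambda>t. f (p(v := t))) field_differentiable at (p v))"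

lemma separately_holomorphic_const [simp]: "separately_holomorphic (\<lambda>q. c)"
  unfolding separately_holomorphic_def by simp

lemma separately_holomorphic_coordinate [simp]: "separately_holomorphic (\<lambda>q. q w)"
  unfolding separately_holomorphic_def
proof (intro allI)
  show "(\<lambda>t. (p(v := t)) w) field_differentiable at (p v)" for p v
    by (cases "v = w") simp_all
qed

lemma separately_holomorphic_add [simp]:
  "separately_holomorphic f \<Longrightarrow> separately_holomorphic g \<Longrightarrow> separately_holomorphic (\<lambda>q. f q + g q)"
  unfolding separately_holomorphic_def by (auto intro: field_differentiable_add)

lemma separately_holomorphic_mult [simp]:
  "separately_holomorphic f \<Longrightarrow> separately_holomorphic g \<Longrightarrow> separately_holomorphic (\<lambda>q. f q * g q)"
  unfolding separately_holomorphic_def by (auto intro: field_differentiable_mult)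

lemma separately_holomorphic_divide [simp]:
  "separately_holomorphic f \<Longrightarrow> separately_holomorphic (\<lambda>q. f q / c)"
  using separately_holomorphic_mult[of f "\<lambda>_. 1 / c"] by simp

lemma separately_holomorphic_sum [simp]:
  "(\<And>i. i \<in> A \<Longrightarrow> separately_holomorphic (f i)) \<Longrightarrow> separately_holomorphic (\<lambda>q. \<Sum>i\<in>A. f i q)"
  unfolding separately_holomorphic_def by (auto intro!: field_differentiable_sum)

lemma separately_holomorphic_Psi [simp]: "separately_holomorphic (\<lambda>q. Psi q i a)"
  and separately_holomorphic_Psibar [simp]: "separately_holomorphic (\<lambda>q. Psibar q b j)"
  and separately_holomorphic_Bm [simp]: "separately_holomorphic (\<lambda>q. Bm q m n)"
  by (simp_all add: Psi_def Psibar_def Bm_def)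

lemma pd_const [simp]: "pd v (\<lambda>q. c) p = 0"
  unfolding pd_def by simp

lemma pd_coordinate: "pd v (\<lambda>q. q w) p = (if v = w then 1 else 0)"
  unfolding pd_def by simp

lemma pd_add:
  "separately_holomorphic f \<Longrightarrow> separately_holomorphic g \<Longrightarrow>
   pd v (\<lambda>q. f q + g q) p = pd v f p + pd v g p"
  unfolding pd_def separately_holomorphic_def by simp

lemma pd_mult:
  "separately_holomorphic f \<Longrightarrow> separately_holomorphic g \<Longrightarrow>
   pd v (\<lambda>q. f q * g q) p = pd v f p * g p + f p * pd v g p"
  unfolding pd_def separately_holomorphic_def by simp

lemma separately_holomorphic_mmul [simp]:
  "(\<And>i k. separately_holomorphic (\<lambda>q. U q i k)) \<Longrightarrow> (\<And>k j. separately_holomorphic (\<lambda>q. V q k j)) \<Longrightarrow>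
   separately_holomorphic (\<lambda>q. mmul N (U q) (V q) i j)"
  unfolding mmul_def by simp

lemma separately_holomorphic_mpow [simp]:
  "(\<And>k l. separately_holomorphic (\<lambda>q. A q k l)) \<Longrightarrow> separately_holomorphic (\<lambda>q. mpow N (A q) n i j)"
  by (induction n arbitrary: j) (simp_all add: mmul_def)

locale point_derivation =
  fixes D :: "(point \<Rightarrow> complex) \<Rightarrow> complex" and p :: point
  assumes add: "separately_holomorphic f \<Longrightarrow> separately_holomorphic g \<Longrightarrow>
      D (\<lambda>q. f q + g q) = D f + D g"
    and mult: "separately_holomorphic f \<Longrightarrow> separately_holomorphic g \<Longrightarrow>
      D (\<lambda>q. f q * g q) = f p * D g + g p * D f"
    and const: "D (\<lambda>q. c) = 0"
begin

lemma scale: "separately_holomorphic f \<Longrightarrow> D (\<lambda>q. c * f q) = c * D f"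
  using mult[of "\<lambda>_. c" f] by (simp add: const)

lemma divide: "separately_holomorphic f \<Longrightarrow> D (\<lambda>q. f q / c) = D f / c"
  using scale[of f "1 / c"] by simp

lemma sum:
  "(\<And>i. i \<in> A \<Longrightarrow> separately_holomorphic (f i)) \<Longrightarrow> D (\<lambda>q. \<Sum>i\<in>A. f i q) = (\<Sum>i\<in>A. D (f i))"
proof (induction A rule: infinite_finite_induct)
  case (insert x F)
  then show ?case by (simp add: add)
qed (simp_all add: const)

lemma mmul:
  assumes "\<And>i k. separately_holomorphic (\<lambda>q. U q i k)" "\<And>k j. separately_holomorphic (\<lambda>q. V q k j)"
  shows "D (\<lambda>q. mmul N (U q) (V q) i j)
    = mmul N (\<lambda>i k. D (\<lambda>q. U q i k)) (V p) i j + mmul N (U p) (\<lambda>k j. D (\<lambda>q. V q k j)) i j"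
  unfolding mmul_def using assms by (simp add: sum mult sum.distrib algebra_simps)

lemma mpow_mmul:
  assumes "\<And>k l. separately_holomorphic (\<lambda>q. A q k l)" "\<And>k j. separately_holomorphic (\<lambda>q. V q k j)"
  shows "D (\<lambda>q. mmul N (mpow N (A q) n) (V q) i j)
    = mmul N (mpow N (A p) n) (\<lambda>k j. D (\<lambda>q. V q k j)) i j
    + (\<Sum>m<n. mmul N (mmul N (mpow N (A p) m) (\<lambda>k l. D (\<lambda>q. A q k l)))
                      (mmul N (mpow N (A p) (n - Suc m)) (V p)) i j)"
  using assms(2)
proof (induction n arbitrary: V i j)
  case 0
  then show ?case
    by (simp add: mmul_def sum scale)
next
  case (Suc n)
  let ?X = "mpow N (A p)" and ?dA = "\<lambda>k l. D (\<lambda>q. A q k l)"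
  have "D (\<lambda>q. mmul N (mpow N (A q) (Suc n)) (V q) i j)
      = D (\<lambda>q. mmul N (mpow N (A q) n) (mmul N (A q) (V q)) i j)"
    by (simp only: mmul_mpow_Suc)
  also have "\<dots> = mmul N (?X n) (\<lambda>k j. D (\<lambda>q. mmul N (A q) (V q) k j)) i j
      + (\<Sum>m<n. mmul N (mmul N (?X m) ?dA) (mmul N (?X (n - Suc m)) (mmul N (A p) (V p))) i j)"
    using Suc assms(1) by (intro Suc.IH) simp
  also have "mmul N (?X n) (\<lambda>k j. D (\<lambda>q. mmul N (A q) (V q) k j)) i j
      = mmul N (?X (Suc n)) (\<lambda>k j. D (\<lambda>q. V q k j)) i j
        + mmul N (mmul N (?X n) ?dA) (mmul N (?X 0) (V p)) i j"
    using Suc.prems assms(1)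
    by (simp add: mmul mmul_add_right mmul_mpow_Suc mmul_mpow_0 mmul_assoc add.commute
        del: mpow.simps(1))
  also have "(\<Sum>m<n. mmul N (mmul N (?X m) ?dA) (mmul N (?X (n - Suc m)) (mmul N (A p) (V p))) i j)
      = (\<Sum>m<n. mmul N (mmul N (?X m) ?dA) (mmul N (?X (Suc n - Suc m)) (V p)) i j)"
    by (intro sum.cong refl) (simp add: mmul_mpow_Suc[symmetric] Suc_diff_Suc)
  finally show ?case
    by (simp add: algebra_simps)
qed

lemma sandwich:
  assumes "\<And>a i. separately_holomorphic (\<lambda>q. U q a i)" "\<And>k l. separately_holomorphic (\<lambda>q. A q k l)"
    "\<And>j b. separately_holomorphic (\<lambda>q. V q j b)"
  shows "D (\<lambda>q. mmul N (U q) (mmul N (mpow N (A q) n) (V q)) a b)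
    = mmul N (\<lambda>a i. D (\<lambda>q. U q a i)) (mmul N (mpow N (A p) n) (V p)) a b
    + mmul N (mmul N (U p) (mpow N (A p) n)) (\<lambda>j b. D (\<lambda>q. V q j b)) a b
    + (\<Sum>m<n. mmul N (mmul N (U p) (mpow N (A p) m))
         (mmul N (\<lambda>k l. D (\<lambda>q. A q k l)) (mmul N (mpow N (A p) (n - Suc m)) (V p))) a b)"
proof -
  have "D (\<lambda>q. mmul N (U q) (mmul N (mpow N (A q) n) (V q)) a b)
      = mmul N (\<lambda>a i. D (\<lambda>q. U q a i)) (mmul N (mpow N (A p) n) (V p)) a b
      + mmul N (U p) (\<lambda>i b. D (\<lambda>q. mmul N (mpow N (A q) n) (V q) i b)) a b"
    using assms by (intro mmul) simp_all
  also have "(\<lambda>i b. D (\<lambda>q. mmul N (mpow N (A q) n) (V q) i b))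
    = (\<lambda>i b. mmul N (mpow N (A p) n) (\<lambda>k j. D (\<lambda>q. V q k j)) i b
        + (\<Sum>m<n. mmul N (mmul N (mpow N (A p) m) (\<lambda>k l. D (\<lambda>q. A q k l)))
                          (mmul N (mpow N (A p) (n - Suc m)) (V p)) i b))"
    using assms by (intro ext mpow_mmul)
  finally show ?thesis
    by (simp add: mmul_add_right mmul_sum_right mmul_assoc)
qed

end

lemma PiRep_antisym: "PiRep N K w v p = - PiRep N K v w p"
  by (cases v; cases w) simp_all

lemma pbr_antisym: "pbr N K g f p = - pbr N K f g p"
proof -
  have swap: "pd v g p * PiRep N K v w p * pd w f p = - (pd w f p * PiRep N K w v p * pd v g p)"
    for v w
    using PiRep_antisym[of N K v w p] by simp
  have "pbr N K g f p = (\<Sum>w\<in>vars N K. \<Sum>v\<in>vars N K. pd v g p * PiRep N K v w p * pd w f p)"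
    unfolding pbr_def by (rule sum.swap)
  also have "\<dots> = - pbr N K f g p"
    unfolding pbr_def swap by (simp add: sum_negf)
  finally show ?thesis .
qed

lemma point_derivation_pbr_left: "point_derivation (\<lambda>f. pbr N K f h p) p"
  by unfold_locales
    (simp_all add: pbr_def pd_add pd_mult ring_distribs sum.distrib sum_distrib_left mult_ac)

lemma point_derivation_pbr_right: "point_derivation (\<lambda>g. pbr N K h g p) p"
proof -
  interpret left: point_derivation "\<lambda>f. pbr N K f h p" p
    by (rule point_derivation_pbr_left)
  have flip: "pbr N K h g p = - pbr N K g h p" for g
    by (rule pbr_antisym)
  show ?thesis
    by unfold_locales (simp_all only: flip left.add left.mult left.const, simp_all)
qed

lemma pbr_coordinate:
  "pbr N K (\<lambda>q. q v) (\<lambda>q. q w) p = (if v \<in> vars N K \<and> w \<in> vars N K then PiRep N K v w p else 0)"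
proof -
  have delta: "pd v' (\<lambda>q. q v) p * PiRep N K v' w' p * pd w' (\<lambda>q. q w) p =
      (if w' = w then (if v' = v then PiRep N K v w p else 0) else 0)" for v' w'
    by (simp add: pd_coordinate)
  have "finite (vars N K)"
    unfolding vars_def by simp
  then show ?thesis
    unfolding pbr_def delta by (cases "w \<in> vars N K") (simp_all add: sum.delta)
qed

lemma VPsi_in_vars [simp]: "VPsi i a \<in> vars N K \<longleftrightarrow> i < N \<and> a < K"
  and VPsibar_in_vars [simp]: "VPsibar b j \<in> vars N K \<longleftrightarrow> b < K \<and> j < N"
  and VB_in_vars [simp]: "VB m n \<in> vars N K \<longleftrightarrow> m < N \<and> n < N"
  unfolding vars_def by auto

lemma pbr_Psi_Psibar:
  "b < K \<Longrightarrow> j < N \<Longrightarrow>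
   pbr N K (\<lambda>q. Psi q i a) (\<lambda>q. Psibar q b j) p = (if a = b \<and> i = j then 1 else 0)"
  unfolding Psi_def Psibar_def by (auto simp: pbr_coordinate)

lemma pbr_Psi_Psi: "pbr N K (\<lambda>q. Psi q i a) (\<lambda>q. Psi q j b) p = 0"
  and pbr_Psibar_Psibar: "pbr N K (\<lambda>q. Psibar q a i) (\<lambda>q. Psibar q b j) p = 0"
  and pbr_Bm_Psi: "pbr N K (\<lambda>q. Bm q m n) (\<lambda>q. Psi q j b) p = 0"
  and pbr_Bm_Psibar: "pbr N K (\<lambda>q. Bm q m n) (\<lambda>q. Psibar q b j) p = 0"
  unfolding Psi_def Psibar_def Bm_def by (simp_all add: pbr_coordinate)

lemma pbr_Bm_Bm:
  "m < N \<Longrightarrow> n < N \<Longrightarrow> k < N \<Longrightarrow> l < N \<Longrightarrow>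
   pbr N K (\<lambda>q. Bm q m n) (\<lambda>q. Bm q k l) p
     = (if n = k then (\<Sum>a<K. Psibar p a l * Psi p m a) else 0)
       - (if m = l then (\<Sum>a<K. Psibar p a n * Psi p k a) else 0)"
  unfolding Bm_def by (simp add: pbr_coordinate Psi_def Psibar_def)

lemma pbr_Psibar_Psi:
  "b < K \<Longrightarrow> j < N \<Longrightarrow>
   pbr N K (\<lambda>q. Psibar q b j) (\<lambda>q. Psi q i a) p = - (if a = b \<and> i = j then 1 else 0)"
  by (subst pbr_antisym) (simp add: pbr_Psi_Psibar)

lemma pbr_const_left: "pbr N K (\<lambda>q. c) g p = 0"
  and pbr_const_right: "pbr N K f (\<lambda>q. c) p = 0"
  by (rule point_derivation.const[OF point_derivation_pbr_left],
      rule point_derivation.const[OF point_derivation_pbr_right])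

definition half_Btilde :: "nat \<Rightarrow> point \<Rightarrow> nat \<Rightarrow> nat \<Rightarrow> complex" where
  "half_Btilde K p k l = Btilde K p k l / 2"

lemma separately_holomorphic_half_Btilde [simp]: "separately_holomorphic (\<lambda>q. half_Btilde K q k l)"
  unfolding half_Btilde_def Btilde_def by simp

lemma pbr_half_Btilde_Psi:
  assumes "l < N" "j < N" "b < K"
  shows "pbr N K (\<lambda>q. half_Btilde K q k l) (\<lambda>q. Psi q j b) p
    = - (if l = j then Psi p k b / 2 else 0)"
proof -
  interpret point_derivation "\<lambda>f. pbr N K f (\<lambda>q. Psi q j b) p" p
    by (rule point_derivation_pbr_left)
  show ?thesis
    using assms unfolding half_Btilde_def Btilde_def
    by (simp add: divide add sum mult pbr_Bm_Psi pbr_Psi_Psi pbr_Psibar_Psi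
        mult_if_zero_left mult_if_zero_right sum_negf)
qed

lemma pbr_half_Btilde_Psibar:
  assumes "i < N" "a < K"
  shows "pbr N K (\<lambda>q. half_Btilde K q k l) (\<lambda>q. Psibar q a i) p
    = (if k = i then Psibar p a l / 2 else 0)"
proof -
  interpret point_derivation "\<lambda>f. pbr N K f (\<lambda>q. Psibar q a i) p" p
    by (rule point_derivation_pbr_left)
  show ?thesis
    using assms unfolding half_Btilde_def Btilde_def
    by (simp add: divide add sum mult pbr_Bm_Psibar pbr_Psibar_Psibar pbr_Psi_Psibar
        mult_if_zero_left mult_if_zero_right)
qed

lemma pbr_half_Btilde_half_Btilde:
  assumes "k < N" "l < N" "m < N" "n < N"
  shows "pbr N K (\<lambda>q. half_Btilde K q k l) (\<lambda>q. half_Btilde K q m n) p = 0"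
proof -
  interpret left: point_derivation "\<lambda>f. pbr N K f (\<lambda>q. half_Btilde K q m n) p" p
    by (rule point_derivation_pbr_left)
  interpret right: point_derivation "\<lambda>g. pbr N K (\<lambda>q. Bm q k l) g p" p
    by (rule point_derivation_pbr_right)
  have Bm: "pbr N K (\<lambda>q. Bm q k l) (\<lambda>q. half_Btilde K q m n) p
      = pbr N K (\<lambda>q. Bm q k l) (\<lambda>q. Bm q m n) p / 2"
    unfolding half_Btilde_def Btilde_def
    by (simp add: right.divide right.add right.sum right.mult pbr_Bm_Psi pbr_Bm_Psibar)
  have Psi: "pbr N K (\<lambda>q. Psi q k c) (\<lambda>q. half_Btilde K q m n) p
      = (if n = k then Psi p m c / 2 else 0)"
    if "c < K" for c
    using assms that by (subst pbr_antisym) (simp add: pbr_half_Btilde_Psi)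
  have Psibar: "pbr N K (\<lambda>q. Psibar q c l) (\<lambda>q. half_Btilde K q m n) p
      = - (if m = l then Psibar p c n / 2 else 0)"
    if "c < K" for c
    using assms that by (subst pbr_antisym) (simp add: pbr_half_Btilde_Psibar)
  \<comment> \<open>the bracket of the \<open>psi psibar\<close> part cancels that of \<open>B\<close>\<close>
  show ?thesis
    using assms unfolding half_Btilde_def[of K _ k l] Btilde_def
    by (simp add: left.divide left.add left.sum left.mult Bm Psi Psibar pbr_Bm_Bm
        mult_if_zero_left mult_if_zero_right sum_negf sum_subtractf diff_divide_distrib
        sum_divide_distrib sum_distrib_left mult.commute)
qed

definition moment :: "nat \<Rightarrow> nat \<Rightarrow> nat \<Rightarrow> nat \<Rightarrow> nat \<Rightarrow> point \<Rightarrow> complex" where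
  "moment N K n a b p = mmul N (Psibar p) (mmul N (mpow N (half_Btilde K p) n) (Psi p)) a b"

lemma moment_split:
  "mmul N (mmul N (Psibar p) (mpow N (half_Btilde K p) m)) (mmul N (mpow N (half_Btilde K p) n) (Psi p))
     a b = moment N K (m + n) a b p"
  unfolding moment_def by (simp only: mmul_assoc mmul_mpow_mpow)

lemma moment_split_right:
  "mmul N (mmul N (Psibar p) (mpow N (half_Btilde K p) m)) (Psi p) a b = moment N K m a b p"
  unfolding moment_def by (simp only: mmul_assoc)

lemma moment_eq:
  "moment N K n a b = (\<lambda>q. mmul N (Psibar q) (mmul N (mpow N (half_Btilde K q) n) (Psi q)) a b)"
  unfolding moment_def by simp

lemma (in point_derivation) moment_expansion:
  "D (moment N K n a b)
    = mmul N (\<lambda>a i. D (\<lambda>q. Psibar q a i)) (mmul N (mpow N (half_Btilde K p) n) (Psi p)) a b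
    + mmul N (mmul N (Psibar p) (mpow N (half_Btilde K p) n)) (\<lambda>j b. D (\<lambda>q. Psi q j b)) a b
    + (\<Sum>m<n. mmul N (mmul N (Psibar p) (mpow N (half_Btilde K p) m))
        (mmul N (\<lambda>k l. D (\<lambda>q. half_Btilde K q k l))
          (mmul N (mpow N (half_Btilde K p) (n - Suc m)) (Psi p))) a b)"
  unfolding moment_eq by (rule sandwich) simp_all

lemma pbr_moment_Psi:
  assumes "a < K" "b < K" "d < K" "l < N"
  shows "pbr N K (moment N K r a b) (\<lambda>q. Psi q l d) p
    = - (if a = d then mmul N (mpow N (half_Btilde K p) r) (Psi p) l b else 0)
      - (\<Sum>m<r. moment N K m a d p * mmul N (mpow N (half_Btilde K p) (r - Suc m)) (Psi p) l b) / 2"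
proof -
  interpret point_derivation "\<lambda>f. pbr N K f (\<lambda>q. Psi q l d) p" p
    by (rule point_derivation_pbr_left)
  have dPsibar: "mmul N (\<lambda>a i. pbr N K (\<lambda>q. Psibar q a i) (\<lambda>q. Psi q l d) p) W a b
      = - (if a = d then W l b else 0)"
    for W :: "nat \<Rightarrow> nat \<Rightarrow> complex"
    using assms unfolding mmul_def by (simp add: pbr_Psibar_Psi mult_if_zero_left sum_negf)
  have dX: "mmul N (\<lambda>k j. pbr N K (\<lambda>q. half_Btilde K q k j) (\<lambda>q. Psi q l d) p) W
      = (\<lambda>k j. Psi p k d * (- W l j / 2))"
    for W :: "nat \<Rightarrow> nat \<Rightarrow> complex"
    using assms unfolding mmul_def by (simp add: pbr_half_Btilde_Psi mult_if_zero_left sum_negf)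
  show ?thesis
    unfolding moment_expansion dX mmul_column_times_row[of N _ "Psi p" d] moment_split_right
    by (simp add: dPsibar pbr_Psi_Psi sum_divide_distrib sum_negf)
qed

lemma pbr_moment_Psibar:
  assumes "a < K" "b < K" "c < K" "k < N"
  shows "pbr N K (moment N K r a b) (\<lambda>q. Psibar q c k) p
    = (if b = c then mmul N (Psibar p) (mpow N (half_Btilde K p) r) a k else 0)
      + (\<Sum>m<r. mmul N (Psibar p) (mpow N (half_Btilde K p) m) a k * moment N K (r - Suc m) c b p)
        / 2"
proof -
  interpret point_derivation "\<lambda>f. pbr N K f (\<lambda>q. Psibar q c k) p" p
    by (rule point_derivation_pbr_left)
  have dPsi: "mmul N M (\<lambda>j b. pbr N K (\<lambda>q. Psi q j b) (\<lambda>q. Psibar q c k) p) a b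
      = (if b = c then M a k else 0)"
    for M :: "nat \<Rightarrow> nat \<Rightarrow> complex"
    using assms unfolding mmul_def by (simp add: pbr_Psi_Psibar mult_if_zero_right)
  have dX: "mmul N (\<lambda>k' l. pbr N K (\<lambda>q. half_Btilde K q k' l) (\<lambda>q. Psibar q c k) p) W
      = (\<lambda>k' j. (if k' = k then 1 else 0) * (mmul N (Psibar p) W c j / 2))"
    for W :: "nat \<Rightarrow> nat \<Rightarrow> complex"
    using assms unfolding mmul_def by (auto simp: pbr_half_Btilde_Psibar sum_divide_distrib)
  show ?thesis
    unfolding moment_expansion dX dPsi
      mmul_column_times_row[of N _ "\<lambda>k' k. if k' = k then 1 else 0" k]
    using assms by (simp add: pbr_Psibar_Psibar moment_def sum_divide_distrib mmul_delta_right)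
qed

lemma pbr_moment_half_Btilde:
  assumes "a < K" "b < K" "k < N" "l < N"
  shows "pbr N K (moment N K r a b) (\<lambda>q. half_Btilde K q k l) p
    = (mmul N (Psibar p) (mpow N (half_Btilde K p) r) a l * Psi p k b
       - Psibar p a l * mmul N (mpow N (half_Btilde K p) r) (Psi p) k b) / 2"
proof -
  interpret point_derivation "\<lambda>f. pbr N K f (\<lambda>q. half_Btilde K q k l) p" p
    by (rule point_derivation_pbr_left)
  have dPsibar: "mmul N (\<lambda>a i. pbr N K (\<lambda>q. Psibar q a i) (\<lambda>q. half_Btilde K q k l) p) W a b
      = - (Psibar p a l * W k b) / 2" for W :: "nat \<Rightarrow> nat \<Rightarrow> complex"
    using assms unfolding mmul_def
    by (subst pbr_antisym) (simp add: pbr_half_Btilde_Psibar mult_if_zero_left sum_negf)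
  have dPsi: "mmul N M (\<lambda>j b. pbr N K (\<lambda>q. Psi q j b) (\<lambda>q. half_Btilde K q k l) p) a b
      = M a l * Psi p k b / 2"
    for M :: "nat \<Rightarrow> nat \<Rightarrow> complex"
    using assms unfolding mmul_def
    by (subst pbr_antisym) (simp add: pbr_half_Btilde_Psi mult_if_zero_right sum_negf)
  have dX: "mmul N M
      (mmul N (\<lambda>k' l'. pbr N K (\<lambda>q. half_Btilde K q k' l') (\<lambda>q. half_Btilde K q k l) p) W) a b = 0"
    for M W :: "nat \<Rightarrow> nat \<Rightarrow> complex"
    using assms unfolding mmul_def by (simp add: pbr_half_Btilde_half_Btilde)
  show ?thesis
    unfolding moment_expansion dPsibar dPsi dX by (simp add: diff_divide_distrib)
qed

lemma mmul_pbr_moment_Psibar: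
  assumes "a < K" "b < K" "c < K" "d < K"
  shows "mmul N (\<lambda>c k. pbr N K (moment N K r a b) (\<lambda>q. Psibar q c k) p) W c d
    = (if b = c then mmul N (mmul N (Psibar p) (mpow N (half_Btilde K p) r)) W a d else 0)
      + (\<Sum>m<r. mmul N (mmul N (Psibar p) (mpow N (half_Btilde K p) m)) W a d
                  * moment N K (r - Suc m) c b p) / 2"
  using assms unfolding mmul_def[of N _ W]
  by (simp add: pbr_moment_Psibar ring_distribs sum.distrib sum_distrib_left sum_distrib_right
      sum_divide_distrib mult_if_zero_left sum.swap[of _ "{..<N}" "{..<r}"] mult_ac)

lemma mmul_pbr_moment_Psi:
  assumes "a < K" "b < K" "c < K" "d < K"
  shows "mmul N V (\<lambda>l d. pbr N K (moment N K r a b) (\<lambda>q. Psi q l d) p) c d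
    = - (if a = d then mmul N V (mmul N (mpow N (half_Btilde K p) r) (Psi p)) c b else 0)
      - (\<Sum>m<r. moment N K m a d p * mmul N V (mmul N (mpow N (half_Btilde K p) (r - Suc m)) (Psi p)) c b)
        / 2"
  using assms unfolding mmul_def[of N V] 
  by (simp add: pbr_moment_Psi ring_distribs sum.distrib sum_distrib_left sum_divide_distrib
      sum_subtractf sum_negf mult_if_zero_right sum.swap[of _ "{..<N}" "{..<r}"] mult_ac)

lemma mmul_pbr_moment_half_Btilde:
  assumes "a < K" "b < K"
  shows "mmul N V (mmul N (\<lambda>k l. pbr N K (moment N K r a b) (\<lambda>q. half_Btilde K q k l) p) W) c d
    = (mmul N V (Psi p) c b * mmul N (mmul N (Psibar p) (mpow N (half_Btilde K p) r)) W a d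
       - mmul N V (mmul N (mpow N (half_Btilde K p) r) (Psi p)) c b * mmul N (Psibar p) W a d) / 2"
  using assms unfolding mmul_def[of N V] mmul_def[of N _ W]
  by (simp only: sum_product)
    (simp add: pbr_moment_half_Btilde sum_distrib_left sum_distrib_right ring_distribs
      sum_subtractf diff_divide_distrib sum_divide_distrib mult_ac)

lemma pbr_moment_moment:
  assumes "a < K" "b < K" "c < K" "d < K"
  shows "pbr N K (moment N K r a b) (moment N K s c d) p
    = (if b = c then moment N K (r + s) a d p else 0)
      - (if a = d then moment N K (r + s) c b p else 0)
      + exchange_sum (\<lambda>i j. moment N K i a d p * moment N K j c b p) r s"
proof -
  interpret point_derivation "\<lambda>g. pbr N K (moment N K r a b) g p" p
    by (rule point_derivation_pbr_right)
  let ?M = "\<lambda>n a b. moment N K n a b p"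
  let ?F = "\<lambda>i j. ?M i a d * ?M j c b"
  have "pbr N K (moment N K r a b) (moment N K s c d) p
    = (if b = c then ?M (r + s) a d else 0) + (\<Sum>m<r. ?M (m + s) a d * ?M (r - Suc m) c b) / 2
      + (- (if a = d then ?M (s + r) c b else 0) - (\<Sum>m<r. ?M m a d * ?M (s + (r - Suc m)) c b) / 2)
      + (\<Sum>m<s. ?M m c b * ?M (r + (s - Suc m)) a d - ?M (m + r) c b * ?M (s - Suc m) a d) / 2"
    unfolding moment_expansion mmul_pbr_moment_Psibar[OF assms] mmul_pbr_moment_Psi[OF assms]
      mmul_pbr_moment_half_Btilde[OF assms(1,2)]
      moment_split moment_split_right moment_def[symmetric] sum_divide_distrib ..
  moreover have "(\<Sum>m<r. ?M (m + s) a d * ?M (r - Suc m) c b)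
      - (\<Sum>m<r. ?M m a d * ?M (s + (r - Suc m)) c b) = exchange_sum ?F r s"
    unfolding exchange_sum_def sum_subtractf
    by (intro arg_cong2[where f = minus] sum.cong) (auto simp: add.commute)
  moreover have "(\<Sum>m<s. ?M m c b * ?M (r + (s - Suc m)) a d - ?M (m + r) c b * ?M (s - Suc m) a d)
      = exchange_sum ?F r s"
    unfolding exchange_sum_reflect[of ?F r s, symmetric]
    by (intro sum.cong) (auto simp: add.commute mult.commute)
  ultimately show ?thesis
    by (simp only: add.commute[of s r]) (simp add: field_simps)
qed

lemma Tpull_of_nat: "Tpull N K (int n) a b = moment N K n a b"
  unfolding Tpull_def moment_def mmul_def half_Btilde_def[abs_def]
  by (simp add: fun_eq_iff sum_distrib_left mult.assoc)

lemma Tpull_minus_one: "Tpull N K (-1) a b = (\<lambda>q. if a = b then 1 else 0)"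
  and Tpull_below: "n < -1 \<Longrightarrow> Tpull N K n a b = (\<lambda>q. 0)"
  unfolding Tpull_def by (auto simp: fun_eq_iff)

(* Tpull N K (int m - 1) is the coefficient of u^-m in T(u). *)
lemma pbr_Tpull:
  assumes "a < K" "b < K" "c < K" "d < K"
  shows "pbr N K (Tpull N K (int m - 1) a b) (Tpull N K (int n - 1) c d) p
    = exchange_sum (\<lambda>i j. Tpull N K (int i - 1) a d p * Tpull N K (int j - 1) c b p) m n"
proof (cases m; cases n)
  fix m' n' assume "m = Suc m'" "n = Suc n'"
  then show ?thesis
    using assms
    by (simp add: exchange_sum_Suc_Suc Tpull_of_nat Tpull_minus_one pbr_moment_moment add.commute
        del: of_nat_add)
qed (simp_all add: Tpull_minus_one pbr_const_left pbr_const_right)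

theorem mainTheorem12:
  fixes N K :: nat and a b c d :: nat and r s :: int and p :: point
  assumes "a < K" "b < K" "c < K" "d < K" "r \<ge> -1" "s \<ge> -1"
  shows "pbr N K (Tpull N K r a b) (Tpull N K (s - 1) c d) p
           - pbr N K (Tpull N K (r - 1) a b) (Tpull N K s c d) p
         = Tpull N K (s - 1) a d p * Tpull N K (r - 1) c b p
           - Tpull N K (r - 1) a d p * Tpull N K (s - 1) c b p"
proof -
  define m n where "m = nat (r + 1)" and "n = nat (s + 1)"
  then have r: "r = int m - 1" and s: "s = int n - 1"
    using assms(5,6) by simp_all
  show ?thesis
  proof (cases m; cases n)
    fix m' n' assume "m = Suc m'" "n = Suc n'"
    then have "r = int (Suc m') - 1" "r - 1 = int m' - 1"
      and "s = int (Suc n') - 1" "s - 1 = int n' - 1"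
      using r s by simp_all
    then show ?thesis
      using exchange_sum_step[of "\<lambda>i j. Tpull N K (int i - 1) a d p * Tpull N K (int j - 1) c b p"]
      by (simp only: pbr_Tpull[OF assms(1-4)])
  qed (use r s in \<open>simp_all add: Tpull_below Tpull_minus_one pbr_const_left pbr_const_right\<close>)
qed

end
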